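(* Let $0<\rho<1$ and let $\mathcal{S}=(S_1,\dots,S_m)$ be a collection of $m$ subsets of $[n]$ with $\mathrm{opt}(\mathcal{S})\le k$. Suppose $U_{\mathrm{smpl}}\subseteq[n]$ is obtained by picking each element of $[n]$ independently with probability $p\ge 16\,k\log m/(\rho n)$. Then, with probability $1-1/m^2$, every collection of $k$ sets in $\mathcal{S}$ that covers $U_{\mathrm{smpl}}$ entirely also covers at least $(1-\rho)n$ elements of $[n]$.
   Context: $\mathrm{opt}(\mathcal{S})$ denotes the minimum number of sets of $\mathcal{S}$ whose union is $[n]$. A collection covers a set $U$ if $U$ is contained in the union of its members. *)

theory Defs
  imports "HOL-Probability.Probability" "HOL-Library.Extended_Nat"
begin

text \<open>A set system S_1,...,S_m over the ground set [n] = {1..n}, given as a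
function S indexed by {1..m}. A subcollection is an index set I.\<close>

definition covers :: "(nat \<Rightarrow> nat set) \<Rightarrow> nat set \<Rightarrow> nat set \<Rightarrow> bool" where
  "covers S I U \<longleftrightarrow> U \<subseteq> (\<Union>i\<in>I. S i)"

definition opt :: "nat \<Rightarrow> nat \<Rightarrow> (nat \<Rightarrow> nat set) \<Rightarrow> enat" where
  "opt n m S = (INF I \<in> {I. I \<subseteq> {1..m} \<and> (\<Union>i\<in>I. S i) = {1..n}}. enat (card I))"

definition sample_pmf :: "nat \<Rightarrow> real \<Rightarrow> nat set pmf" where
  "sample_pmf n p =
     map_pmf (\<lambda>f. {x \<in> {1..n}. f x}) (Pi_pmf {1..n} False (\<lambda>_. bernoulli_pmf p))"

end

theory Submission
  imports Defs
begin

text \<open>Call a collection of at most \<open>k\<close> sets bad if it covers fewer than \<open>(1 - \<rho>) n\<close> points.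
  A fixed bad collection misses at least \<open>\<rho> n\<close> points, so it covers the sample only if the
  sample avoids all of them, which happens with probability at most
  \<open>(1 - p)\<^bsup>\<rho> n\<^esup> \<le> exp (-p \<rho> n) \<le> m\<^bsup>-16k\<^esup>\<close>. There are at most \<open>(k + 1) m\<^sup>k\<close> collections
  of at most \<open>k\<close> sets, so a union bound leaves failure probability at most \<open>1 / m\<^sup>2\<close>.\<close>

lemma prob_sample_disjoint:
  assumes "C \<subseteq> {1..n}" "0 \<le> p" "p \<le> 1"
  shows "measure_pmf.prob (sample_pmf n p) {U. U \<inter> C = {}} = (1 - p) ^ card C"
proof -
  have "measure_pmf.prob (sample_pmf n p) {U. U \<inter> C = {}}
      = measure_pmf.prob (Pi_pmf {1..n} False (\<lambda>_. bernoulli_pmf p))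
          (Pi {1..n} (\<lambda>x. if x \<in> C then {False} else UNIV))"
    unfolding sample_pmf_def measure_map_pmf
    by (rule arg_cong[where f="measure_pmf.prob _"]) (use assms(1) in \<open>auto simp: Pi_def\<close>)
  also have "\<dots> = (\<Prod>x\<in>{1..n}. measure_pmf.prob (bernoulli_pmf p) (if x \<in> C then {False} else UNIV))"
    by (rule measure_Pi_pmf_Pi) simp
  also have "\<dots> = (\<Prod>x\<in>{1..n}. if x \<in> C then 1 - p else 1)"
    by (rule prod.cong) (use assms in \<open>auto simp: measure_pmf_single\<close>)
  also have "\<dots> = (1 - p) ^ card C"
    using assms(1) by (simp add: prod.If_cases Int_absorb1)
  finally show ?thesis .
qed

lemma one_minus_power_le_exp:
  fixes p :: real
  assumes "p \<le> 1"
  shows "(1 - p) ^ c \<le> exp (- p * real c)"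
proof -
  have "(1 - p) ^ c \<le> exp (- p) ^ c"
    by (rule power_mono) (use exp_ge_add_one_self[of "- p"] assms in auto)
  then show ?thesis
    by (simp add: exp_of_nat_mult[symmetric] mult.commute)
qed

lemma prob_sample_disjoint_le_exp:
  assumes "C \<subseteq> {1..n}" "0 \<le> p" "p \<le> 1" "c \<le> real (card C)"
  shows "measure_pmf.prob (sample_pmf n p) {U. U \<inter> C = {}} \<le> exp (- p * c)"
proof -
  have "(1 - p) ^ card C \<le> exp (- p * real (card C))"
    using assms(3) by (rule one_minus_power_le_exp)
  also have "\<dots> \<le> exp (- p * c)"
    using assms(2,4) by (simp add: mult_left_mono)
  finally show ?thesis
    using prob_sample_disjoint[OF assms(1-3)] by simp
qed

lemma card_subsets_card_le:
  assumes "finite A" "A \<noteq> {}"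
  shows "card {I. I \<subseteq> A \<and> card I \<le> k} \<le> (k + 1) * card A ^ k"
proof -
  have "{I. I \<subseteq> A \<and> card I \<le> k} = (\<Union>j\<le>k. {I. I \<subseteq> A \<and> card I = j})"
    by auto
  then have "card {I. I \<subseteq> A \<and> card I \<le> k} \<le> (\<Sum>j\<le>k. card {I. I \<subseteq> A \<and> card I = j})"
    by (simp add: card_UN_le)
  also have "\<dots> = (\<Sum>j\<le>k. card A choose j)"
    using assms(1) by (simp add: n_subsets)
  also have "\<dots> \<le> (\<Sum>j\<le>k. card A ^ k)"
  proof (rule sum_mono)
    fix j assume "j \<in> {..k}"
    moreover have "card A \<ge> 1"
      using assms by (simp add: Suc_le_eq card_gt_0_iff)
    ultimately have "card A ^ j \<le> card A ^ k"
      by (simp add: power_increasing)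
    then show "card A choose j \<le> card A ^ k"
      by (cases "j \<le> card A") (auto simp: binomial_eq_0 intro: le_trans[OF binomial_le_pow])
  qed
  finally show ?thesis by simp
qed

lemma prob_sample_covered_by_bad_le:
  assumes S_sub: "\<And>i. i \<in> {1..m} \<Longrightarrow> S i \<subseteq> {1..n}"
    and "m \<ge> 1" "0 \<le> p" "p \<le> 1"
  shows "measure_pmf.prob (sample_pmf n p)
           (\<Union>I\<in>{I. I \<subseteq> {1..m} \<and> card I \<le> k \<and> real (card (\<Union>i\<in>I. S i)) < (1 - \<rho>) * real n}.
              {U. covers S I U})
         \<le> real ((k + 1) * m ^ k) * exp (- p * (\<rho> * real n))"
    (is "measure_pmf.prob ?M (\<Union>I\<in>?B. _) \<le> _")
proof -
  have B_sub: "?B \<subseteq> {I. I \<subseteq> {1..m} \<and> card I \<le> k}"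
    by auto
  have fin: "finite {I. I \<subseteq> {1..m} \<and> card I \<le> k}"
    by (rule finite_subset[of _ "Pow {1..m}"]) auto
  have card_B: "card ?B \<le> (k + 1) * m ^ k"
    using card_mono[OF fin B_sub] card_subsets_card_le[of "{1..m}" k] assms(2) by simp
  have bad: "measure_pmf.prob ?M {U. covers S I U} \<le> exp (- p * (\<rho> * real n))" if "I \<in> ?B" for I
  proof -
    define C where "C = {1..n} - (\<Union>i\<in>I. S i)"
    have cover_sub: "(\<Union>i\<in>I. S i) \<subseteq> {1..n}"
      using that S_sub by blast
    then have "card (\<Union>i\<in>I. S i) \<le> n"
      using card_mono[OF _ cover_sub] by simp
    then have "real (card C) = real n - real (card (\<Union>i\<in>I. S i))"
      using cover_sub unfolding C_def by (simp add: card_Diff_subset finite_subset of_nat_diff)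
    then have "\<rho> * real n \<le> real (card C)"
      using that by (simp add: algebra_simps)
    then have "measure_pmf.prob ?M {U. U \<inter> C = {}} \<le> exp (- p * (\<rho> * real n))"
      using assms(3,4) by (intro prob_sample_disjoint_le_exp) (auto simp: C_def)
    moreover have "measure_pmf.prob ?M {U. covers S I U} \<le> measure_pmf.prob ?M {U. U \<inter> C = {}}"
      by (rule measure_pmf.finite_measure_mono) (auto simp: covers_def C_def)
    ultimately show ?thesis by linarith
  qed
  have "measure_pmf.prob ?M (\<Union>I\<in>?B. {U. covers S I U}) \<le> (\<Sum>I\<in>?B. measure_pmf.prob ?M {U. covers S I U})"
    by (rule measure_pmf.finite_measure_subadditive_finite) (use finite_subset[OF B_sub fin] in auto)
  also have "\<dots> \<le> real (card ?B) * exp (- p * (\<rho> * real n))"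
    using sum_mono[of ?B, OF bad] by simp
  also have "\<dots> \<le> real ((k + 1) * m ^ k) * exp (- p * (\<rho> * real n))"
    by (intro mult_right_mono of_nat_mono card_B) simp
  finally show ?thesis .
qed

lemma count_mult_exp_le_inverse_square:
  fixes m k :: nat and t :: real
  assumes m: "m \<ge> 2" and k: "k \<ge> 1" and t: "16 * real k * ln (real m) \<le> t"
  shows "real ((k + 1) * m ^ k) * exp (- t) \<le> 1 / (real m)^2"
proof -
  have "k + 1 \<le> 2 ^ k"
    using less_exp[of k] by (simp add: Suc_le_eq)
  also have "\<dots> \<le> m ^ k"
    using m by (simp add: power_mono)
  finally have "(k + 1) * m ^ k * m ^ 2 \<le> m ^ k * m ^ k * m ^ 2"
    by (intro mult_right_mono) auto
  also have "\<dots> = m ^ (2 * k + 2)"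
    by (simp add: power_add[symmetric] mult_2)
  also have "\<dots> \<le> m ^ (16 * k)"
    using m k by (intro power_increasing) auto
  finally have count: "real ((k + 1) * m ^ k) * (real m)^2 \<le> real m ^ (16 * k)"
    using of_nat_mono by fastforce
  have "exp (- t) \<le> 1 / exp (real (16 * k) * ln (real m))"
    using t by (simp add: exp_minus divide_inverse)
  also have "\<dots> = 1 / real m ^ (16 * k)"
    unfolding exp_of_nat_mult using m by simp
  finally have "real ((k + 1) * m ^ k) * exp (- t) \<le> real ((k + 1) * m ^ k) / real m ^ (16 * k)"
    by (simp add: mult_left_mono divide_inverse)
  also have "\<dots> \<le> 1 / (real m)^2"
    using count m by (simp add: divide_simps)
  finally show ?thesis .
qed

lemma opt_le_imp_cover:
  assumes "opt n m S \<le> enat k"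
  obtains I where "I \<subseteq> {1..m}" "(\<Union>i\<in>I. S i) = {1..n}" "card I \<le> k"
proof -
  have "opt n m S < enat (Suc k)"
    using assms by (simp add: le_less_trans)
  then show ?thesis
    using that unfolding opt_def INF_less_iff by auto
qed

theorem lemma3p9:
  fixes n m k :: nat and S :: "nat \<Rightarrow> nat set" and \<rho> p :: real
  assumes "0 < \<rho>" and "\<rho> < 1"
    and "\<And>i. i \<in> {1..m} \<Longrightarrow> S i \<subseteq> {1..n}"
    and "opt n m S \<le> enat k"
    and "0 \<le> p" and "p \<le> 1"
    and "p \<ge> 16 * real k * ln (real m) / (\<rho> * real n)"
  shows "measure_pmf.prob (sample_pmf n p)
           {U. \<forall>I. I \<subseteq> {1..m} \<and> card I \<le> k \<and> covers S I U
                 \<longrightarrow> real (card (\<Union>i\<in>I. S i)) \<ge> (1 - \<rho>) * real n}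
         \<ge> 1 - 1 / (real m)^2"
proof -
  let ?M = "sample_pmf n p"
  let ?bad = "\<Union>I\<in>{I. I \<subseteq> {1..m} \<and> card I \<le> k \<and> real (card (\<Union>i\<in>I. S i)) < (1 - \<rho>) * real n}.
                {U. covers S I U}"
  obtain I0 where I0: "I0 \<subseteq> {1..m}" "(\<Union>i\<in>I0. S i) = {1..n}" "card I0 \<le> k"
    using opt_le_imp_cover[OF assms(4)] .
  show ?thesis
  proof (cases "n = 0 \<or> m = 1")
    case True
    then show ?thesis by auto
  next
    case False
    then have "I0 \<noteq> {}" "finite I0"
      using I0(1,2) finite_subset[OF I0(1)] by auto
    then have k: "k \<ge> 1" and m: "m \<ge> 2"
      using I0(1,3) False by (auto simp: Suc_le_eq card_gt_0_iff)
    have "16 * real k * ln (real m) \<le> p * (\<rho> * real n)"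
      using assms(1,7) False by (simp add: pos_divide_le_eq)
    then have "real ((k + 1) * m ^ k) * exp (- p * (\<rho> * real n)) \<le> 1 / (real m)^2"
      using count_mult_exp_le_inverse_square[OF m k] by simp
    moreover have "measure_pmf.prob ?M ?bad \<le> real ((k + 1) * m ^ k) * exp (- p * (\<rho> * real n))"
      by (rule prob_sample_covered_by_bad_le) (use assms(3,5,6) m in auto)
    ultimately have "measure_pmf.prob ?M ?bad \<le> 1 / (real m)^2"
      by linarith
    moreover have "measure_pmf.prob ?M (space (measure_pmf ?M) - ?bad) = 1 - measure_pmf.prob ?M ?bad"
      by (rule measure_pmf.prob_compl) simp
    moreover have "space (measure_pmf ?M) - ?bad
        = {U. \<forall>I. I \<subseteq> {1..m} \<and> card I \<le> k \<and> covers S I U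
                 \<longrightarrow> real (card (\<Union>i\<in>I. S i)) \<ge> (1 - \<rho>) * real n}"
      by (auto simp: not_le)
    ultimately show ?thesis by simp
  qed
qed

end
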